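(* In the setting described in the context, suppose the binary-flux assumption holds. Then the following are equivalent: (i) (class decomposition) for every $k\in K$ there exists $E^k\subset\bar J_n$ such that $k=\bigcup_{j\in E^k}\mathcal O^j$; (ii) there exists an optimal weight family; (iii) the family $\bar w^K=(\bar w^k)_{k\in K}$ defined by $\bar w^{j\to k}:=\frac{b_1}{b_2|\bar J^k_n|}\mathbb 1_{j\in\bar J^k_n}$, where $\bar J^k_n:=\arg\max_{j\in\bar J_n}\Phi^{j\to k}_{\mathrm{disc}}$, is an optimal weight family.
   Context: Let $\mathcal O$ be a finite set of sample types and $K$ a finite set of classes with $|K|\ge2$, each class $k\in K$ identified with a nonempty subset of $\mathcal O$, the classes forming a partition of $\mathcal O$ (so "$o\in k$" means type $o$ has class $k$). Let $\bar J_n$ be a finite nonempty index set (selected $n$-element subsets of input species), and for each $o\in\mathcal O$ and $j\in\bar J_n$ let $\int_o\Phi^j\ge0$ be a given number (the integrated flux of $j$ during presentation of a sample of type $o$). Let $b_1,b_2>0$. Flux discrepancy: $\Phi^{j\to k}_{\mathrm{disc}}:=\frac{1}{|k|}\sum_{o\in k}\int_o\Phi^j-\frac{1}{|K|-1}\sum_{k'\ne k}\frac{1}{|k'|}\sum_{o\in k'}\int_o\Phi^j$. An optimal weight family is $q^K=(q^k)_{k\in K}$ with $q^k=(q^{j\to k})_{j\in\bar J_n}$, $q^{j\to k}\ge0$, $\sum_jq^{j\to k}=\frac{b_1}{b_2}$, such that for all $k\in K$ and $o\in\mathcal O$: $\sum_{j\in\bar J_n}q^{j\to k}\int_o\Phi^j>0$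 if and only if $o\in k$. Binary-flux assumption: there is $p>0$ such that $\int_o\Phi^j\in\{0,p\}$ for all $j\in\bar J_n$, $o\in\mathcal O$; setting $\mathcal O^j:=\{o\in\mathcal O:\int_o\Phi^j=p\}$, all the sets $\mathcal O^j$, $j\in\bar J_n$, have the same cardinality. *)

theory Defs
  imports Complex_Main "HOL-Library.Disjoint_Sets"
begin

text \<open>Integrated fluxes: F s j = integral of Phi^j during presentation of a sample of type o.
  Classes are subsets of the set of sample types; K is the set of classes.\<close>

definition flux_disc :: "('o \<Rightarrow> 'j \<Rightarrow> real) \<Rightarrow> 'o set set \<Rightarrow> 'o set \<Rightarrow> 'j \<Rightarrow> real" where
  "flux_disc F K k j =
     (1 / real (card k)) * (\<Sum>s\<in>k. F s j)
     - (1 / (real (card K) - 1)) * (\<Sum>k'\<in>K - {k}. (1 / real (card k')) * (\<Sum>s\<in>k'. F s j))"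

definition optimal_weight_family ::
  "'o set \<Rightarrow> 'o set set \<Rightarrow> 'j set \<Rightarrow> ('o \<Rightarrow> 'j \<Rightarrow> real) \<Rightarrow> real \<Rightarrow> real
     \<Rightarrow> ('o set \<Rightarrow> 'j \<Rightarrow> real) \<Rightarrow> bool" where
  "optimal_weight_family Ob K J F b1 b2 q \<longleftrightarrow>
     (\<forall>k\<in>K. (\<forall>j\<in>J. q k j \<ge> 0) \<and> (\<Sum>j\<in>J. q k j) = b1 / b2 \<and>
        (\<forall>s\<in>Ob. (\<Sum>j\<in>J. q k j * F s j) > 0 \<longleftrightarrow> s \<in> k))"

definition flux_support :: "'o set \<Rightarrow> ('o \<Rightarrow> 'j \<Rightarrow> real) \<Rightarrow> real \<Rightarrow> 'j \<Rightarrow> 'o set" where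
  "flux_support Ob F p j = {s\<in>Ob. F s j = p}"

definition argmax_disc :: "'j set \<Rightarrow> ('o \<Rightarrow> 'j \<Rightarrow> real) \<Rightarrow> 'o set set \<Rightarrow> 'o set \<Rightarrow> 'j set" where
  "argmax_disc J F K k = {j. is_arg_max (flux_disc F K k) (\<lambda>j. j \<in> J) j}"

definition wbar :: "'j set \<Rightarrow> ('o \<Rightarrow> 'j \<Rightarrow> real) \<Rightarrow> 'o set set \<Rightarrow> real \<Rightarrow> real
     \<Rightarrow> 'o set \<Rightarrow> 'j \<Rightarrow> real" where
  "wbar J F K b1 b2 k j =
     (if j \<in> argmax_disc J F K k then b1 / (b2 * real (card (argmax_disc J F K k))) else 0)"

end

theory Submission
  imports Defs
begin

text \<open>For nonnegative weights q and binary fluxes, the response \<open>\<Sum>\<^sub>j q\<^sub>j F\<^sub>s\<^sup>j\<close> is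
  positive exactly on the union of the supports \<open>O\<^sup>j\<close> with \<open>q\<^sub>j > 0\<close>. Hence an optimal
  weight family exists iff every class is a union of supports, which gives (i) \<open>\<longleftrightarrow>\<close> (ii).
  For (iii), the discrepancy of j towards k is at most \<open>p |O\<^sup>j \<inter> k| / |k|\<close>, with equality
  when \<open>O\<^sup>j \<subseteq> k\<close>. As all supports have the same size, the arg max is then exactly the set
  of j with \<open>O\<^sup>j \<subseteq> k\<close>, and the union of these supports is k.\<close>

lemma sum_mult_pos_iff:
  fixes q f :: "'j \<Rightarrow> real"
  assumes "finite J" and "\<And>j. j \<in> J \<Longrightarrow> 0 \<le> q j" and "\<And>j. j \<in> J \<Longrightarrow> 0 \<le> f j"
  shows "0 < (\<Sum>j\<in>J. q j * f j) \<longleftrightarrow> (\<exists>j\<in>J. 0 < q j \<and> 0 < f j)"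
proof -
  have nonneg: "\<And>j. j \<in> J \<Longrightarrow> 0 \<le> q j * f j"
    using assms by simp
  have "0 \<le> (\<Sum>j\<in>J. q j * f j)"
    using nonneg by (rule sum_nonneg)
  moreover have "(\<Sum>j\<in>J. q j * f j) = 0 \<longleftrightarrow> (\<forall>j\<in>J. q j * f j = 0)"
    using assms(1) nonneg by (rule sum_nonneg_eq_0_iff)
  ultimately have "0 < (\<Sum>j\<in>J. q j * f j) \<longleftrightarrow> (\<exists>j\<in>J. q j * f j \<noteq> 0)"
    by auto
  also have "\<dots> \<longleftrightarrow> (\<exists>j\<in>J. 0 < q j \<and> 0 < f j)"
    using assms by (auto simp: less_le)
  finally show ?thesis .
qed

lemma positive_response_eq_UN_flux_support:
  fixes F :: "'o \<Rightarrow> 'j \<Rightarrow> real"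
  assumes "finite J" and "\<And>j. j \<in> J \<Longrightarrow> 0 \<le> q j" and "p > 0"
    and binary: "\<forall>j\<in>J. \<forall>s\<in>Ob. F s j = 0 \<or> F s j = p"
  shows "{s\<in>Ob. 0 < (\<Sum>j\<in>J. q j * F s j)} = (\<Union>j\<in>{j\<in>J. 0 < q j}. flux_support Ob F p j)"
proof -
  have "0 < (\<Sum>j\<in>J. q j * F s j) \<longleftrightarrow> (\<exists>j\<in>J. 0 < q j \<and> F s j = p)" if "s \<in> Ob" for s
  proof -
    have "\<And>j. j \<in> J \<Longrightarrow> 0 \<le> F s j \<and> (0 < F s j \<longleftrightarrow> F s j = p)"
      using binary \<open>s \<in> Ob\<close> \<open>p > 0\<close> by fastforce
    then show ?thesis
      using sum_mult_pos_iff[of J q "F s"] assms(1,2) by auto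
  qed
  then show ?thesis
    unfolding flux_support_def by auto
qed

lemma optimal_weight_family_iff_UN_flux_support:
  fixes F :: "'o \<Rightarrow> 'j \<Rightarrow> real"
  assumes "finite J" and "p > 0" and "\<Union>K \<subseteq> Ob"
    and binary: "\<forall>j\<in>J. \<forall>s\<in>Ob. F s j = 0 \<or> F s j = p"
  shows "optimal_weight_family Ob K J F b1 b2 q \<longleftrightarrow>
    (\<forall>k\<in>K. (\<forall>j\<in>J. 0 \<le> q k j) \<and> (\<Sum>j\<in>J. q k j) = b1 / b2 \<and>
       k = (\<Union>j\<in>{j\<in>J. 0 < q k j}. flux_support Ob F p j))"
proof -
  have "(\<forall>s\<in>Ob. 0 < (\<Sum>j\<in>J. q k j * F s j) \<longleftrightarrow> s \<in> k) \<longleftrightarrow>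
      k = (\<Union>j\<in>{j\<in>J. 0 < q k j}. flux_support Ob F p j)"
    if "k \<in> K" and "\<forall>j\<in>J. 0 \<le> q k j" for k
  proof -
    have "(\<forall>s\<in>Ob. 0 < (\<Sum>j\<in>J. q k j * F s j) \<longleftrightarrow> s \<in> k) \<longleftrightarrow>
        k = {s\<in>Ob. 0 < (\<Sum>j\<in>J. q k j * F s j)}"
      using assms(3) \<open>k \<in> K\<close> by blast
    also have "{s\<in>Ob. 0 < (\<Sum>j\<in>J. q k j * F s j)} = (\<Union>j\<in>{j\<in>J. 0 < q k j}. flux_support Ob F p j)"
      using assms(1,2) binary that(2) by (intro positive_response_eq_UN_flux_support) auto
    finally show ?thesis .
  qed
  then show ?thesis
    unfolding optimal_weight_family_def by (intro ball_cong refl conj_cong) auto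
qed

lemma sum_binary_flux_eq_card:
  fixes F :: "'o \<Rightarrow> 'j \<Rightarrow> real"
  assumes "finite k" and "k \<subseteq> Ob" and "\<forall>s\<in>Ob. F s j = 0 \<or> F s j = p"
  shows "(\<Sum>s\<in>k. F s j) = p * card (flux_support Ob F p j \<inter> k)"
proof -
  have "(\<Sum>s\<in>k. F s j) = (\<Sum>s\<in>flux_support Ob F p j \<inter> k. F s j)"
    using assms unfolding flux_support_def by (intro sum.mono_neutral_right) auto
  also have "\<dots> = (\<Sum>s\<in>flux_support Ob F p j \<inter> k. p)"
    unfolding flux_support_def by simp
  finally show ?thesis
    by simp
qed

lemma flux_disc_le_class_share:
  fixes F :: "'o \<Rightarrow> 'j \<Rightarrow> real"
  assumes part: "partition_on Ob K" and "finite Ob" and "k \<in> K" and "p \<ge> 0"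
    and binary: "\<forall>s\<in>Ob. F s j = 0 \<or> F s j = p"
  shows "flux_disc F K k j \<le> p * card (flux_support Ob F p j \<inter> k) / card k"
proof -
  have "finite K"
    using part \<open>finite Ob\<close> by (rule finite_elements[rotated])
  then have "1 \<le> real (card K)"
    using \<open>k \<in> K\<close> card_0_eq by fastforce
  moreover have "0 \<le> (\<Sum>k'\<in>K - {k}. 1 / real (card k') * (\<Sum>s\<in>k'. F s j))"
  proof -
    have "0 \<le> F s j" if "s \<in> Ob" for s
      using binary that \<open>p \<ge> 0\<close> by auto
    then show ?thesis
      using partition_onD1[OF part] by (intro sum_nonneg mult_nonneg_nonneg) auto
  qed
  moreover have "(\<Sum>s\<in>k. F s j) = p * card (flux_support Ob F p j \<inter> k)"
    using partition_onD1[OF part] \<open>finite Ob\<close> \<open>k \<in> K\<close> binary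
    by (intro sum_binary_flux_eq_card) (auto intro: finite_subset)
  ultimately show ?thesis
    unfolding flux_disc_def by simp
qed

lemma flux_disc_eq_if_flux_support_subset:
  fixes F :: "'o \<Rightarrow> 'j \<Rightarrow> real"
  assumes part: "partition_on Ob K" and "finite Ob" and "k \<in> K"
    and binary: "\<forall>s\<in>Ob. F s j = 0 \<or> F s j = p"
    and sub: "flux_support Ob F p j \<subseteq> k"
  shows "flux_disc F K k j = p * card (flux_support Ob F p j) / card k"
proof -
  have "F s j = 0" if "k' \<in> K - {k}" and "s \<in> k'" for k' s
  proof -
    have "k \<inter> k' = {}"
      using disjointD[OF partition_onD2[OF part] \<open>k \<in> K\<close>] that by blast
    then have "s \<notin> k"
      using that by blast
    then show ?thesis
      using partition_onD1[OF part] binary sub that unfolding flux_support_def by blast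
  qed
  moreover have "(\<Sum>s\<in>k. F s j) = p * card (flux_support Ob F p j \<inter> k)"
    using partition_onD1[OF part] \<open>finite Ob\<close> \<open>k \<in> K\<close> binary
    by (intro sum_binary_flux_eq_card) (auto intro: finite_subset)
  ultimately show ?thesis
    unfolding flux_disc_def using sub by (simp add: Int_absorb2)
qed

lemma argmax_disc_eq_flux_support_subset:
  fixes F :: "'o \<Rightarrow> 'j \<Rightarrow> real"
  assumes part: "partition_on Ob K" and finO: "finite Ob" and "k \<in> K" and "p > 0"
    and binary: "\<forall>j\<in>J. \<forall>s\<in>Ob. F s j = 0 \<or> F s j = p"
    and samecard: "\<forall>j\<in>J. \<forall>j'\<in>J. card (flux_support Ob F p j) = card (flux_support Ob F p j')"
    and "j0 \<in> J" and "flux_support Ob F p j0 \<subseteq> k"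
  shows "argmax_disc J F K k = {j\<in>J. flux_support Ob F p j \<subseteq> k}"
proof -
  define M where "M = p * card (flux_support Ob F p j0) / card k"
  have "0 < card k"
    using partition_onD1[OF part] partition_onD3[OF part] finO \<open>k \<in> K\<close>
    by (metis Union_upper card_gt_0_iff finite_subset)
  have max: "flux_disc F K k j = M" if "j \<in> J" and "flux_support Ob F p j \<subseteq> k" for j
    using flux_disc_eq_if_flux_support_subset[OF part finO \<open>k \<in> K\<close> _ that(2)] binary samecard
      \<open>j0 \<in> J\<close> that(1) unfolding M_def by metis
  have less: "flux_disc F K k j < M" if "j \<in> J" and "\<not> flux_support Ob F p j \<subseteq> k" for j
  proof -
    have "flux_support Ob F p j \<inter> k \<subset> flux_support Ob F p j"
      using that(2) by blast
    then have "card (flux_support Ob F p j \<inter> k) < card (flux_support Ob F p j)"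
      using finO by (intro psubset_card_mono) (simp_all add: flux_support_def)
    also have "\<dots> = card (flux_support Ob F p j0)"
      using samecard \<open>j0 \<in> J\<close> \<open>j \<in> J\<close> by blast
    finally have card_less: "card (flux_support Ob F p j \<inter> k) < card (flux_support Ob F p j0)" .
    have "flux_disc F K k j \<le> p * card (flux_support Ob F p j \<inter> k) / card k"
      using binary \<open>p > 0\<close> \<open>j \<in> J\<close> by (intro flux_disc_le_class_share[OF part finO \<open>k \<in> K\<close>]) auto
    also have "\<dots> < M"
      unfolding M_def using card_less \<open>p > 0\<close> \<open>0 < card k\<close> by (simp add: divide_strict_right_mono)
    finally show ?thesis .
  qed
  have le: "flux_disc F K k j \<le> M" if "j \<in> J" for j
    using max[OF that] less[OF that] by (cases "flux_support Ob F p j \<subseteq> k") (simp_all add: less_imp_le)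
  have "j \<in> argmax_disc J F K k \<longleftrightarrow> j \<in> J \<and> flux_support Ob F p j \<subseteq> k" for j
  proof
    assume "j \<in> argmax_disc J F K k"
    then have "j \<in> J" and "\<not> flux_disc F K k j < flux_disc F K k j0"
      using \<open>j0 \<in> J\<close> unfolding argmax_disc_def is_arg_max_def by blast+
    then show "j \<in> J \<and> flux_support Ob F p j \<subseteq> k"
      using less max[OF \<open>j0 \<in> J\<close> \<open>flux_support Ob F p j0 \<subseteq> k\<close>] by auto
  next
    assume "j \<in> J \<and> flux_support Ob F p j \<subseteq> k"
    then show "j \<in> argmax_disc J F K k"
      using max le unfolding argmax_disc_def is_arg_max_def by (auto simp: not_less)
  qed
  then show ?thesis
    by blast
qed

lemma wbar_uniform_on_argmax_disc:
  assumes "finite J" and "argmax_disc J F K k \<noteq> {}" and "b1 > 0" and "b2 > 0"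
  shows "\<forall>j\<in>J. 0 \<le> wbar J F K b1 b2 k j"
    and "(\<Sum>j\<in>J. wbar J F K b1 b2 k j) = b1 / b2"
    and "{j\<in>J. 0 < wbar J F K b1 b2 k j} = argmax_disc J F K k"
proof -
  define A where "A = argmax_disc J F K k"
  have "A \<subseteq> J"
    unfolding A_def argmax_disc_def is_arg_max_def by blast
  then have "0 < card A"
    using assms(1,2) unfolding A_def by (meson card_gt_0_iff finite_subset)
  then have pos: "0 < b1 / (b2 * card A)"
    using assms(3,4) by simp
  have w: "wbar J F K b1 b2 k = (\<lambda>j. if j \<in> A then b1 / (b2 * card A) else 0)"
    unfolding wbar_def A_def by auto
  show "\<forall>j\<in>J. 0 \<le> wbar J F K b1 b2 k j"
    using pos unfolding w by simp
  show "{j\<in>J. 0 < wbar J F K b1 b2 k j} = A"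
    using pos \<open>A \<subseteq> J\<close> unfolding w by auto
  have "(\<Sum>j\<in>J. wbar J F K b1 b2 k j) = card A * (b1 / (b2 * card A))"
    using assms(1) \<open>A \<subseteq> J\<close> unfolding w by (simp add: sum.If_cases Int_absorb1)
  also have "\<dots> = b1 / b2"
    using \<open>0 < card A\<close> by simp
  finally show "(\<Sum>j\<in>J. wbar J F K b1 b2 k j) = b1 / b2" .
qed

lemma wbar_optimal_at_class:
  fixes F :: "'o \<Rightarrow> 'j \<Rightarrow> real"
  assumes part: "partition_on Ob K" and finO: "finite Ob" and "p > 0"
    and binary: "\<forall>j\<in>J. \<forall>s\<in>Ob. F s j = 0 \<or> F s j = p"
    and samecard: "\<forall>j\<in>J. \<forall>j'\<in>J. card (flux_support Ob F p j) = card (flux_support Ob F p j')"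
    and "finite J" and "b1 > 0" and "b2 > 0"
    and "k \<in> K" and "E \<subseteq> J" and k_eq: "k = (\<Union>j\<in>E. flux_support Ob F p j)"
  shows "(\<forall>j\<in>J. 0 \<le> wbar J F K b1 b2 k j) \<and> (\<Sum>j\<in>J. wbar J F K b1 b2 k j) = b1 / b2 \<and>
    k = (\<Union>j\<in>{j\<in>J. 0 < wbar J F K b1 b2 k j}. flux_support Ob F p j)"
proof -
  define A where "A = {j\<in>J. flux_support Ob F p j \<subseteq> k}"
  have "E \<subseteq> A"
    using \<open>E \<subseteq> J\<close> unfolding A_def by (auto simp: k_eq)
  have "k \<noteq> {}"
    using partition_onD3[OF part] \<open>k \<in> K\<close> by blast
  then obtain j0 where "j0 \<in> E"
    using k_eq by blast
  then have "argmax_disc J F K k = A"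
    using \<open>E \<subseteq> A\<close> unfolding A_def
    by (intro argmax_disc_eq_flux_support_subset[OF part finO \<open>k \<in> K\<close> \<open>p > 0\<close> binary samecard]) auto
  moreover have "k = (\<Union>j\<in>A. flux_support Ob F p j)"
    using \<open>E \<subseteq> A\<close> unfolding k_eq A_def by blast
  moreover have "A \<noteq> {}"
    using \<open>E \<subseteq> A\<close> \<open>j0 \<in> E\<close> by blast
  ultimately show ?thesis
    using wbar_uniform_on_argmax_disc[OF \<open>finite J\<close> _ \<open>b1 > 0\<close> \<open>b2 > 0\<close>, of F K k] by simp
qed

theorem theorem13:
  fixes Ob :: "'o set" and K :: "'o set set" and J :: "'j set"
    and F :: "'o \<Rightarrow> 'j \<Rightarrow> real" and b1 b2 p :: real
  assumes finO: "finite Ob"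
    and partK: "partition_on Ob K"
    and cardK: "card K \<ge> 2"
    and finJ: "finite J" and neJ: "J \<noteq> {}"
    and Fnn: "\<forall>s\<in>Ob. \<forall>j\<in>J. F s j \<ge> 0"
    and b1: "b1 > 0" and b2: "b2 > 0"
    and p: "p > 0"
    and binary: "\<forall>j\<in>J. \<forall>s\<in>Ob. F s j = 0 \<or> F s j = p"
    and samecard: "\<forall>j\<in>J. \<forall>j'\<in>J. card (flux_support Ob F p j) = card (flux_support Ob F p j')"
  shows "((\<forall>k\<in>K. \<exists>E. E \<subseteq> J \<and> k = (\<Union>j\<in>E. flux_support Ob F p j))
            \<longleftrightarrow> (\<exists>q. optimal_weight_family Ob K J F b1 b2 q))
       \<and> ((\<exists>q. optimal_weight_family Ob K J F b1 b2 q)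
            \<longleftrightarrow> optimal_weight_family Ob K J F b1 b2 (wbar J F K b1 b2))"
proof -
  note optimal_iff = optimal_weight_family_iff_UN_flux_support
    [OF finJ p equalityD2[OF partition_onD1[OF partK]] binary]
  have decomposition_if_optimal: "\<exists>E. E \<subseteq> J \<and> k = (\<Union>j\<in>E. flux_support Ob F p j)"
    if "optimal_weight_family Ob K J F b1 b2 q" and "k \<in> K" for q k
  proof (intro exI conjI)
    show "k = (\<Union>j\<in>{j\<in>J. 0 < q k j}. flux_support Ob F p j)"
      using optimal_iff[THEN iffD1, OF that(1)] \<open>k \<in> K\<close> by blast
  qed auto
  have wbar_optimal_if_decomposition: "optimal_weight_family Ob K J F b1 b2 (wbar J F K b1 b2)"
    if "\<forall>k\<in>K. \<exists>E. E \<subseteq> J \<and> k = (\<Union>j\<in>E. flux_support Ob F p j)"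
    unfolding optimal_iff
  proof
    fix k
    assume "k \<in> K"
    with that obtain E where "E \<subseteq> J" and "k = (\<Union>j\<in>E. flux_support Ob F p j)"
      by blast
    then show "(\<forall>j\<in>J. 0 \<le> wbar J F K b1 b2 k j) \<and> (\<Sum>j\<in>J. wbar J F K b1 b2 k j) = b1 / b2 \<and>
        k = (\<Union>j\<in>{j\<in>J. 0 < wbar J F K b1 b2 k j}. flux_support Ob F p j)"
      by (rule wbar_optimal_at_class[OF partK finO p binary samecard finJ b1 b2 \<open>k \<in> K\<close>])
  qed
  show ?thesis
    using decomposition_if_optimal wbar_optimal_if_decomposition by blast
qed

end
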